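(* Let $n\ge3$, let $\overrightarrow{C_n}$ be an oriented cycle and $D$ a distance set of $\overrightarrow{C_n}$ with $\min(D)=1$. If $\overrightarrow{C_n}$ is $D$-antimagic, then $\overrightarrow{C_n}$ is either unidirectional or $\Theta$-oriented.
   Context: An oriented graph is a simple graph each of whose edges is given one direction (an arc $(u,v)$ goes from $u$ to $v$). For vertices $u,v$, $d(u,v)$ is the length of a shortest directed path from $u$ to $v$ ($d(u,u)=0$, $\infty$ if no path). A distance set of an oriented graph is a nonempty set $D$ of nonnegative integers each of which is a finite distance $d(u,v)$ for some pair of vertices. $N_D(v)=\{y : d(v,y)\in D\}$; for a bijection $f:V\to\{1,\dots,|V|\}$, $\omega_D(v)=\sum_{x\in N_D(v)}f(x)$ (empty sum $0$); $f$ is $D$-antimagic if distinct vertices have distinct $D$-weights, and the graph is $D$-antimagic if such an $f$ exists. A source is a vertex of in-degree $0$, a sink a vertex of out-degree $0$. An oriented cycle $\overrightarrow{C_n}$ is an orientation of the cycle on $v_1,\dots,v_n$. It is unidirectional if (up to relabeling) its arcs are $(v_i,v_{i+1})$, $1\le i\le n-1$, and $(v_n,v_1)$. It is $\Theta$-oriented if it has exactly one source and exactly one sink and these are adjacent; up to relabeling its arcs are $(v_i,v_{i+1})$, $1\le i\le n-1$, and $(v_1,v_n)$. *)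

theory Defs
  imports Main
begin

text \<open>An oriented cycle on the vertex set {0..<n}: the underlying cycle has edges
  {i, (i+1) mod n} for i < n; the edge with index i is oriented i -> (i+1) mod n if
  ori i holds, and (i+1) mod n -> i otherwise.  Every oriented cycle is isomorphic to
  one of these.\<close>

definition cyc_arcs :: "nat \<Rightarrow> (nat \<Rightarrow> bool) \<Rightarrow> (nat \<times> nat) set" where
  "cyc_arcs n ori =
     {(i, (i + 1) mod n) | i. i < n \<and> ori i} \<union> {((i + 1) mod n, i) | i. i < n \<and> \<not> ori i}"

definition has_dist :: "(nat \<times> nat) set \<Rightarrow> nat \<Rightarrow> nat \<Rightarrow> nat \<Rightarrow> bool" where
  "has_dist A u v k \<longleftrightarrow> (u, v) \<in> A ^^ k \<and> (\<forall>j<k. (u, v) \<notin> A ^^ j)"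

definition is_distance_set :: "nat \<Rightarrow> (nat \<times> nat) set \<Rightarrow> nat set \<Rightarrow> bool" where
  "is_distance_set n A D \<longleftrightarrow>
     D \<noteq> {} \<and> (\<forall>k\<in>D. \<exists>u<n. \<exists>v<n. has_dist A u v k)"

definition D_nbhd :: "nat \<Rightarrow> (nat \<times> nat) set \<Rightarrow> nat set \<Rightarrow> nat \<Rightarrow> nat set" where
  "D_nbhd n A D v = {y. y < n \<and> (\<exists>k\<in>D. has_dist A v y k)}"

definition D_weight :: "nat \<Rightarrow> (nat \<times> nat) set \<Rightarrow> nat set \<Rightarrow> (nat \<Rightarrow> nat) \<Rightarrow> nat \<Rightarrow> nat" where
  "D_weight n A D f v = (\<Sum>x\<in>D_nbhd n A D v. f x)"

definition D_antimagic :: "nat \<Rightarrow> (nat \<times> nat) set \<Rightarrow> nat set \<Rightarrow> bool" where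
  "D_antimagic n A D \<longleftrightarrow>
     (\<exists>f. bij_betw f {0..<n} {1..n} \<and> inj_on (D_weight n A D f) {0..<n})"

definition unidirectional :: "nat \<Rightarrow> (nat \<times> nat) set \<Rightarrow> bool" where
  "unidirectional n A \<longleftrightarrow>
     (\<exists>g. bij_betw g {0..<n} {0..<n} \<and> A = {(g i, g ((i + 1) mod n)) | i. i < n})"

definition theta_oriented :: "nat \<Rightarrow> (nat \<times> nat) set \<Rightarrow> bool" where
  "theta_oriented n A \<longleftrightarrow>
     (\<exists>g. bij_betw g {0..<n} {0..<n} \<and>
        A = {(g i, g (i + 1)) | i. i + 1 < n} \<union> {(g 0, g (n - 1))})"

end

theory Submission
  imports Defs
begin

text \<open>Since \<open>min D = 1\<close>, every distance in \<open>D\<close> is positive. A sink reaches no vertex at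
  positive distance, so its \<open>D\<close>-weight is 0; hence a \<open>D\<close>-antimagic graph has at most one sink.
  Likewise every vertex whose only out-neighbour is a sink \<open>t\<close> has \<open>D\<close>-neighbourhood \<open>{t}\<close>,
  so \<open>t\<close> has at most one such in-neighbour. An oriented cycle without a sink is unidirectional.
  One with a unique sink consists of two directed paths from the unique source to the sink;
  if both paths had length at least 2, the two in-neighbours of the sink would both have the
  sink as their only out-neighbour. So one path is a single arc: source and sink are adjacent
  and the cycle is \<open>\<Theta>\<close>-oriented.\<close>

lemma mod_add_left_cancel_less:
  fixes a b n :: nat
  assumes "a < n" "b < n" "(q + a) mod n = (q + b) mod n"
  shows "a = b"
proof -
  have "a = b" if "a \<le> b" "b < n" "(q + a) mod n = (q + b) mod n" for a b
  proof -
    have "n dvd b - a"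
      using that mod_eq_dvd_iff_nat[of "q + a" "q + b" n] by simp
    moreover have "b - a < n"
      using that by simp
    ultimately have "b - a = 0"
      using dvd_imp_le not_less by blast
    then show "a = b"
      using that by simp
  qed
  then show ?thesis
    using assms linorder_le_cases[of a b] by metis
qed

lemma Suc_mod_inj:
  fixes i j n :: nat
  shows "i < n \<Longrightarrow> j < n \<Longrightarrow> Suc i mod n = Suc j mod n \<Longrightarrow> i = j"
  using mod_add_left_cancel_less[of i n j 1] by simp

lemma bij_betw_rotate:
  fixes n :: nat
  assumes "0 < n"
  shows "bij_betw (\<lambda>k. (q + k) mod n) {0..<n} {0..<n}"
proof (rule bij_betw_imageI)
  show "inj_on (\<lambda>k. (q + k) mod n) {0..<n}"
    by (auto simp: inj_on_def dest: mod_add_left_cancel_less)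
  then show "(\<lambda>k. (q + k) mod n) ` {0..<n} = {0..<n}"
    using assms by (intro endo_inj_surj) auto
qed

lemma all_less_rotate:
  fixes n :: nat
  assumes "0 < n" "\<forall>k<n. Q ((c + k) mod n)"
  shows "\<forall>i<n. Q i"
proof (intro allI impI)
  fix i assume "i < n"
  then have "i \<in> (\<lambda>k. (c + k) mod n) ` {0..<n}"
    using bij_betw_imp_surj_on[OF bij_betw_rotate[OF assms(1)]] by simp
  then show "Q i"
    using assms(2) by auto
qed

lemma bij_betw_reflect:
  fixes n :: nat
  assumes "0 < n"
  shows "bij_betw (\<lambda>k. (q + (n - k)) mod n) {0..<n} {0..<n}"
proof (rule bij_betw_imageI)
  show "inj_on (\<lambda>k. (q + (n - k)) mod n) {0..<n}"
  proof (rule inj_onI)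
    fix a b assume ab: "a \<in> {0..<n}" "b \<in> {0..<n}" "(q + (n - a)) mod n = (q + (n - b)) mod n"
    have "(q + (n - a) + (a + b)) mod n = (q + (n - b) + (a + b)) mod n"
      by (rule mod_add_cong[OF ab(3) refl])
    then have "(q + n + b) mod n = (q + n + a) mod n"
      using ab(1,2) by (simp add: algebra_simps)
    then show "a = b"
      using ab(1,2) mod_add_left_cancel_less[of b n a "q + n"] by simp
  qed
  then show "(\<lambda>k. (q + (n - k)) mod n) ` {0..<n} = {0..<n}"
    using assms by (intro endo_inj_surj) auto
qed

lemma relpow_from_sink:
  fixes A :: "('a \<times> 'a) set"
  assumes "\<forall>w. (v, w) \<notin> A" "0 < k"
  shows "(v, y) \<notin> A ^^ k"
proof
  assume "(v, y) \<in> A ^^ k"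
  moreover obtain m where "k = Suc m"
    using assms(2) gr0_implies_Suc by blast
  ultimately show False
    using assms(1) relpow_Suc_D2[where x = v and z = y and R = A and n = m] by auto
qed

lemma relpow_from_in_neighbour_of_sink:
  fixes A :: "('a \<times> 'a) set"
  assumes "\<forall>w. (u, w) \<in> A \<longleftrightarrow> w = t" "\<forall>w. (t, w) \<notin> A" "(u, y) \<in> A ^^ k" "0 < k"
  shows "k = 1 \<and> y = t"
proof -
  obtain m where k: "k = Suc m" using assms(4) by (cases k) auto
  then have "(t, y) \<in> A ^^ m"
    using assms(1,3) relpow_Suc_D2[where x = u and z = y and R = A and n = m] by auto
  then have "m = 0"
    using relpow_from_sink[OF assms(2)] by blast
  then show ?thesis
    using k \<open>(t, y) \<in> A ^^ m\<close> by simp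
qed

lemma has_dist_le_card:
  assumes "finite A" "has_dist A u v k"
  shows "k \<le> card A"
proof (rule ccontr)
  assume "\<not> k \<le> card A"
  obtain j where "j \<le> card A" "(u, v) \<in> A ^^ j"
    using assms relpow_finite_bounded[OF assms(1), of k] unfolding has_dist_def by blast
  then show False
    using assms(2) \<open>\<not> k \<le> card A\<close> unfolding has_dist_def by auto
qed

lemma distance_set_min_one:
  assumes "is_distance_set n A D" "finite A" "Min D = 1"
  shows "1 \<in> D" "0 \<notin> D"
proof -
  \<comment> \<open>\<open>Min\<close> of an infinite set is unspecified, so finiteness of \<open>D\<close> is needed first.\<close>
  have "D \<subseteq> {0..card A}"
    using assms(1) has_dist_le_card[OF assms(2)] unfolding is_distance_set_def by auto
  then have "finite D" "D \<noteq> {}"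
    using assms(1) finite_subset unfolding is_distance_set_def by auto
  then show "1 \<in> D" "0 \<notin> D"
    using Min_in[of D] Min_le[of D 0] assms(3) by auto
qed

lemma D_nbhd_sink:
  assumes "0 \<notin> D" "\<forall>w. (v, w) \<notin> A"
  shows "D_nbhd n A D v = {}"
proof -
  have "\<not> has_dist A v y k" if "k \<in> D" for y k
    using relpow_from_sink[OF assms(2), of k y] assms(1) that unfolding has_dist_def
    by (metis gr0I)
  then show ?thesis
    unfolding D_nbhd_def by blast
qed

lemma D_nbhd_in_neighbour_of_sink:
  assumes "0 \<notin> D" "1 \<in> D" "t < n" "\<forall>w. (u, w) \<in> A \<longleftrightarrow> w = t" "\<forall>w. (t, w) \<notin> A"
  shows "D_nbhd n A D u = {t}"
proof -
  have "has_dist A u t 1"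
    using assms(4,5) unfolding has_dist_def by auto
  moreover have "y = t" if "k \<in> D" "has_dist A u y k" for y k
  proof -
    have "0 < k" using that(1) assms(1) by (metis gr0I)
    then show "y = t"
      using relpow_from_in_neighbour_of_sink[OF assms(4,5), of y k] that(2)
      unfolding has_dist_def by blast
  qed
  ultimately show ?thesis
    using assms(2,3) unfolding D_nbhd_def by blast
qed

lemma D_antimagic_sink_unique:
  assumes "D_antimagic n A D" "0 \<notin> D" "u < n" "v < n" "\<forall>w. (u, w) \<notin> A" "\<forall>w. (v, w) \<notin> A"
  shows "u = v"
proof -
  obtain f where "inj_on (D_weight n A D f) {0..<n}"
    using assms(1) unfolding D_antimagic_def by blast
  moreover have "D_weight n A D f u = D_weight n A D f v"
    using D_nbhd_sink[OF assms(2)] assms(5,6) unfolding D_weight_def by simp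
  ultimately show ?thesis
    using assms(3,4) by (auto dest: inj_onD)
qed

lemma D_antimagic_in_neighbour_of_sink_unique:
  assumes "D_antimagic n A D" "0 \<notin> D" "1 \<in> D" "t < n" "\<forall>w. (t, w) \<notin> A" "u < n" "v < n"
    and "\<forall>w. (u, w) \<in> A \<longleftrightarrow> w = t" "\<forall>w. (v, w) \<in> A \<longleftrightarrow> w = t"
  shows "u = v"
proof -
  obtain f where "inj_on (D_weight n A D f) {0..<n}"
    using assms(1) unfolding D_antimagic_def by blast
  moreover have "D_weight n A D f u = D_weight n A D f v"
    using D_nbhd_in_neighbour_of_sink[OF assms(2-4) _ assms(5)] assms(8,9)
    unfolding D_weight_def by simp
  ultimately show ?thesis
    using assms(6,7) by (auto dest: inj_onD)
qed

lemma finite_cyc_arcs: "finite (cyc_arcs n ori)"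
proof (rule finite_subset)
  show "cyc_arcs n ori \<subseteq> {0..<n} \<times> {0..<n}"
    unfolding cyc_arcs_def by auto
qed simp

lemma cyc_out_arc_iff:
  assumes "i < n"
  shows "(Suc i mod n, w) \<in> cyc_arcs n ori \<longleftrightarrow>
    (ori (Suc i mod n) \<and> w = Suc (Suc i mod n) mod n) \<or> (\<not> ori i \<and> w = i)"
  using assms by (auto simp: cyc_arcs_def dest: Suc_mod_inj)

lemma unidirectional_if_forward:
  assumes "\<forall>i<n. ori i"
  shows "unidirectional n (cyc_arcs n ori)"
  unfolding unidirectional_def
  by (rule exI[of _ id]) (use assms in \<open>auto simp: cyc_arcs_def\<close>)

lemma unidirectional_if_backward:
  assumes "0 < n" "\<forall>i<n. \<not> ori i"
  shows "unidirectional n (cyc_arcs n ori)"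
  unfolding unidirectional_def
proof (intro exI conjI)
  let ?g = "\<lambda>k. (n - k) mod n" and ?s = "\<lambda>i. Suc i mod n"
  show "bij_betw ?g {0..<n} {0..<n}" using bij_betw_reflect[OF assms(1), of 0] by simp
  have step: "Suc (?g (?s i)) mod n = ?g i" if "i < n" for i
    using that by (cases "Suc i = n") (auto simp: mod_Suc_eq Suc_diff_Suc)
  have "?g ` ?s ` {0..<n} = {0..<n}"
    using bij_betw_rotate[OF assms(1), of 1] bij_betw_reflect[OF assms(1), of 0]
    by (simp add: bij_betw_def)
  then have "cyc_arcs n ori = (\<lambda>j. (Suc j mod n, j)) ` ?g ` ?s ` {0..<n}"
    using assms(2) unfolding cyc_arcs_def by auto
  also have "\<dots> = (\<lambda>i. (?g i, ?g (?s i))) ` {0..<n}"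
    unfolding image_image using step by (auto intro!: image_cong)
  finally show "cyc_arcs n ori = {(?g i, ?g ((i + 1) mod n)) | i. i < n}"
    by auto
qed

lemma theta_oriented_if_one_forward:
  assumes "q < n" "\<forall>i<n. ori i \<longleftrightarrow> i = q"
  shows "theta_oriented n (cyc_arcs n ori)"
  unfolding theta_oriented_def
proof (intro exI conjI)
  \<comment> \<open>walk the cycle by decreasing index from the source \<open>q\<close>\<close>
  let ?g = "\<lambda>k. (q + (n - k)) mod n"
  have n: "0 < n" using assms(1) by simp
  show bij: "bij_betw ?g {0..<n} {0..<n}" using bij_betw_reflect[OF n] .
  have first: "?g 0 = q" using assms(1) by simp
  have last: "?g (n - 1) = Suc q mod n" using n by (simp add: Suc_diff_Suc)
  have step: "Suc (?g (Suc k)) mod n = ?g k" if "k < n" for k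
    using that by (simp add: mod_Suc_eq Suc_diff_Suc)
  have "Suc ` {0..<n - 1} = {0..<n} - {0}"
    using n by (auto simp: image_Suc_atLeastLessThan)
  moreover have "bij_betw ?g ({0..<n} - {0}) ({0..<n} - {q})"
    using first assms(1) by (intro bij_betw_DiffI[OF bij]) (auto simp: bij_betw_def)
  ultimately have "?g ` Suc ` {0..<n - 1} = {0..<n} - {q}"
    by (simp add: bij_betw_def)
  moreover have "(\<lambda>j. (Suc j mod n, j)) ` ?g ` Suc ` {0..<n - 1} = (\<lambda>i. (?g i, ?g (i + 1))) ` {0..<n - 1}"
    unfolding image_image using step by (auto intro!: image_cong)
  moreover have "(\<lambda>i. (?g i, ?g (i + 1))) ` {0..<n - 1} = {(?g i, ?g (i + 1)) | i. i + 1 < n}"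
  proof -
    have "i \<in> {0..<n - 1} \<longleftrightarrow> i + 1 < n" for i
      by auto
    then show ?thesis
      unfolding image_def by blast
  qed
  ultimately have bwd: "{(?g i, ?g (i + 1)) | i. i + 1 < n} = (\<lambda>j. (Suc j mod n, j)) ` ({0..<n} - {q})"
    by simp
  have "cyc_arcs n ori = (\<lambda>j. (Suc j mod n, j)) ` ({0..<n} - {q}) \<union> {(q, Suc q mod n)}"
    using assms unfolding cyc_arcs_def by auto
  then show "cyc_arcs n ori = {(?g i, ?g (i + 1)) | i. i + 1 < n} \<union> {(?g 0, ?g (n - 1))}"
    unfolding bwd first last by simp
qed

lemma theta_oriented_if_one_backward:
  assumes "q < n" "\<forall>i<n. ori i \<longleftrightarrow> i \<noteq> q"
  shows "theta_oriented n (cyc_arcs n ori)"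
  unfolding theta_oriented_def
proof (intro exI conjI)
  \<comment> \<open>walk the cycle by increasing index from the source \<open>Suc q mod n\<close>\<close>
  let ?g = "\<lambda>k. (Suc q + k) mod n"
  have n: "0 < n" using assms(1) by simp
  show bij: "bij_betw ?g {0..<n} {0..<n}" using bij_betw_rotate[OF n] .
  have last: "?g (n - 1) = q" using assms(1) by simp
  have "{0..<n - 1} = {0..<n} - {n - 1}"
    using n by auto
  moreover have "bij_betw ?g ({0..<n} - {n - 1}) ({0..<n} - {q})"
    using last assms(1) by (intro bij_betw_DiffI[OF bij]) (auto simp: bij_betw_def)
  ultimately have "?g ` {0..<n - 1} = {0..<n} - {q}"
    by (simp add: bij_betw_def)
  moreover have "{(?g i, ?g (i + 1)) | i. i + 1 < n} = (\<lambda>j. (j, Suc j mod n)) ` ?g ` {0..<n - 1}"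
    by (force simp: mod_Suc_eq)
  ultimately have fwd: "{(?g i, ?g (i + 1)) | i. i + 1 < n} = (\<lambda>j. (j, Suc j mod n)) ` ({0..<n} - {q})"
    by simp
  have "cyc_arcs n ori = (\<lambda>j. (j, Suc j mod n)) ` ({0..<n} - {q}) \<union> {(Suc q mod n, q)}"
    using assms unfolding cyc_arcs_def by auto
  then show "cyc_arcs n ori = {(?g i, ?g (i + 1)) | i. i + 1 < n} \<union> {(?g 0, ?g (n - 1))}"
    unfolding fwd last by simp
qed

lemma cyc_orientation_constant:
  assumes "\<forall>i<n. ori i \<longrightarrow> ori (Suc i mod n)"
  shows "(\<forall>i<n. ori i) \<or> (\<forall>i<n. \<not> ori i)"
proof -
  have propagate: "ori ((i + k) mod n)" if "i < n" "ori i" for i k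
  proof (induction k)
    case 0
    then show ?case using that by simp
  next
    case (Suc k)
    have "(i + k) mod n < n"
      using that(1) by simp
    then have "ori (Suc ((i + k) mod n) mod n)"
      using assms Suc.IH by blast
    then show ?case
      by (simp add: mod_Suc_eq)
  qed
  have "ori j" if "i < n" "ori i" "j < n" for i j
    using propagate[OF that(1,2), of "n + j - i"] that by simp
  then show ?thesis by blast
qed

text \<open>Read from the unique sink \<open>Suc p mod n\<close> onwards, the orientation never switches back
  from forward to backward: a switch at edge \<open>i\<close> would make \<open>Suc i mod n\<close> a second sink.\<close>
lemma cyc_orientation_forward_after_sink:
  assumes "p < n" "\<forall>i<n. ori i \<and> \<not> ori (Suc i mod n) \<longrightarrow> i = p"
    and "k \<le> j" "j < n" "ori ((Suc p + k) mod n)"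
  shows "ori ((Suc p + j) mod n)"
  using assms(3,4)
proof (induction j rule: dec_induct)
  case base
  show ?case using assms(5) .
next
  case (step i)
  let ?e = "(Suc p + i) mod n"
  have "i \<noteq> n - 1" "i < n" "n - 1 < n"
    using step by auto
  then have "?e \<noteq> (Suc p + (n - 1)) mod n"
    using mod_add_left_cancel_less by blast
  moreover have "(Suc p + (n - 1)) mod n = p"
    using assms(1) by simp
  moreover have "?e < n" "ori ?e"
    using assms(1) step by simp_all
  ultimately have "ori (Suc ?e mod n)"
    using assms(2) by metis
  then show ?case
    by (simp add: mod_Suc_eq)
qed

text \<open>\<open>ori i \<and> \<not> ori (Suc i mod n)\<close> says that vertex \<open>Suc i mod n\<close> is a sink of
  \<open>cyc_arcs n ori\<close>. The three alternatives are: the orientation is \<open>\<Theta>\<close> with source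
  \<open>Suc (Suc p mod n) mod n\<close>, it is \<open>\<Theta>\<close> with source \<open>p\<close>, or the sink \<open>Suc p mod n\<close> has the two
  in-neighbours \<open>p\<close> and \<open>Suc (Suc p mod n) mod n\<close>, both of out-degree one.\<close>
lemma cyc_orientation_single_sink:
  assumes "3 \<le> n" "p < n" "ori p" "\<not> ori (Suc p mod n)"
    and unique: "\<forall>i<n. ori i \<and> \<not> ori (Suc i mod n) \<longrightarrow> i = p"
  shows "(\<forall>i<n. ori i \<longleftrightarrow> i \<noteq> Suc p mod n) \<or> (\<forall>i<n. ori i \<longleftrightarrow> i = p)
    \<or> (\<exists>q<n. Suc q mod n = p \<and> ori q \<and> \<not> ori (Suc (Suc p mod n) mod n))"
proof -
  define r where "r k = (Suc p + k) mod n" for k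
  have n: "0 < n" using assms(1) by simp
  have r_inj: "r k = r j \<longleftrightarrow> k = j" if "k < n" "j < n" for k j
    using that mod_add_left_cancel_less unfolding r_def by blast
  have r_onto: "\<forall>i<n. Q i" if "\<forall>k<n. Q (r k)" for Q
    using all_less_rotate[OF n, of Q "Suc p"] that unfolding r_def by blast
  have r_less: "r k < n" and r_first: "r 0 = Suc p mod n" and r_last: "r (n - 1) = p"
    and r_Suc: "r (Suc k) = Suc (r k) mod n" for k
    using assms(2) n unfolding r_def by (auto simp: mod_Suc_eq)
  have propagate: "ori (r j)" if "k \<le> j" "j < n" "ori (r k)" for k j
    using cyc_orientation_forward_after_sink[OF assms(2) unique] that unfolding r_def by blast
  consider "ori (r 1)" | "\<not> ori (r (n - 2))" | "ori (r (n - 2))" "\<not> ori (r 1)"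
    by blast
  then show ?thesis
  proof cases
    case 1
    have "ori (r k) \<longleftrightarrow> r k \<noteq> r 0" if "k < n" for k
    proof (cases "k = 0")
      case False
      then show ?thesis using propagate[of 1 k] 1 r_inj[of k 0] that n by auto
    qed (use assms(4) r_first in simp)
    then have "\<forall>i<n. ori i \<longleftrightarrow> i \<noteq> Suc p mod n"
      using r_onto[of "\<lambda>i. ori i \<longleftrightarrow> i \<noteq> Suc p mod n"] r_first by simp
    then show ?thesis by blast
  next
    case 2
    have "ori (r k) \<longleftrightarrow> r k = r (n - 1)" if "k < n" for k
    proof (cases "k = n - 1")
      case False
      then have "k \<le> n - 2" using that by linarith
      then show ?thesis
        using 2 False propagate[of k "n - 2"] r_inj[of k "n - 1"] that by auto
    qed (use r_last assms(3) in simp)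
    then have "\<forall>i<n. ori i \<longleftrightarrow> i = p"
      using r_onto[of "\<lambda>i. ori i \<longleftrightarrow> i = p"] r_last by simp
    then show ?thesis by blast
  next
    case 3
    have "Suc (n - 2) = n - 1"
      using assms(1) by simp
    then have "Suc (r (n - 2)) mod n = p"
      using r_Suc[of "n - 2"] r_last by simp
    moreover have "r 1 = Suc (Suc p mod n) mod n"
      using r_Suc[of 0] r_first by simp
    ultimately show ?thesis
      using 3 r_less[of "n - 2"] by (intro disjI2 exI[of _ "r (n - 2)"]) simp
  qed
qed

lemma cyc_arcs_sink:
  assumes "i < n" "ori i" "\<not> ori (Suc i mod n)"
  shows "\<forall>w. (Suc i mod n, w) \<notin> cyc_arcs n ori"
  using cyc_out_arc_iff[OF assms(1)] assms(2,3) by simp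

lemma D_antimagic_cyc_sink_unique:
  assumes "D_antimagic n (cyc_arcs n ori) D" "0 \<notin> D" "p < n" "ori p" "\<not> ori (Suc p mod n)"
  shows "\<forall>i<n. ori i \<and> \<not> ori (Suc i mod n) \<longrightarrow> i = p"
proof (intro allI impI)
  fix i assume i: "i < n" "ori i \<and> \<not> ori (Suc i mod n)"
  then have "Suc i mod n = Suc p mod n"
    using D_antimagic_sink_unique[OF assms(1,2)] cyc_arcs_sink assms(3-5) by simp
  then show "i = p"
    using Suc_mod_inj i(1) assms(3) by blast
qed

lemma D_antimagic_cyc_sink_in_neighbours:
  assumes "D_antimagic n (cyc_arcs n ori) D" "0 \<notin> D" "1 \<in> D" "3 \<le> n"
    and "q < n" "Suc q mod n = p" "ori q" "ori p" "\<not> ori (Suc p mod n)"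
  shows "ori (Suc (Suc p mod n) mod n)"
proof (rule ccontr)
  assume v: "\<not> ori (Suc (Suc p mod n) mod n)"
  let ?t = "Suc p mod n" and ?v = "Suc (Suc p mod n) mod n"
  have p: "p < n"
    using assms(5,6) by auto
  have "\<forall>w. (p, w) \<in> cyc_arcs n ori \<longleftrightarrow> w = ?t"
    using cyc_out_arc_iff[OF assms(5)] assms(6-8) by auto
  moreover have "\<forall>w. (?v, w) \<in> cyc_arcs n ori \<longleftrightarrow> w = ?t"
    using cyc_out_arc_iff[where i = ?t and n = n and ori = ori] v assms(9) p by simp
  ultimately have "p = ?v"
    using D_antimagic_in_neighbour_of_sink_unique[OF assms(1,2,3) _ cyc_arcs_sink[OF p assms(8,9)]] p
    by simp
  moreover have "?v = (p + 2) mod n"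
    by (simp add: mod_Suc_eq)
  ultimately have "(p + 0) mod n = (p + 2) mod n"
    using p by simp
  then show False
    using mod_add_left_cancel_less[of 0 n 2 p] assms(4) by simp
qed

theorem mainTheorem5:
  fixes n :: nat and ori :: "nat \<Rightarrow> bool" and D :: "nat set"
  assumes "n \<ge> 3"
    and "is_distance_set n (cyc_arcs n ori) D"
    and "Min D = 1"
    and "D_antimagic n (cyc_arcs n ori) D"
  shows "unidirectional n (cyc_arcs n ori) \<or> theta_oriented n (cyc_arcs n ori)"
proof (cases "\<exists>p<n. ori p \<and> \<not> ori (Suc p mod n)")
  case False
  then show ?thesis
    using cyc_orientation_constant[of n ori] unidirectional_if_forward unidirectional_if_backward assms(1)
    by force
next
  case True
  then obtain p where p: "p < n" "ori p" "\<not> ori (Suc p mod n)"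
    by blast
  have D: "0 \<notin> D" "1 \<in> D"
    using distance_set_min_one[OF assms(2) finite_cyc_arcs assms(3)] by auto
  have "Suc p mod n < n"
    using p(1) by simp
  then show ?thesis
    using cyc_orientation_single_sink[OF assms(1) p D_antimagic_cyc_sink_unique[OF assms(4) D(1) p]]
      theta_oriented_if_one_backward theta_oriented_if_one_forward[OF p(1)]
      D_antimagic_cyc_sink_in_neighbours[OF assms(4) D assms(1) _ _ _ p(2,3)]
    by blast
qed

end
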